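(* Let $q$ be a prime power, let $k\geq 2$ and $r>4$ be integers, and let $n=rk$. Let $\gamma\in\mathbb{F}_{q^n}$ be a root of an irreducible polynomial of degree $r$ over $\mathbb{F}_{q^k}$. For each pair $(\tau,\delta)\in\mathbb{F}_{q^k}^*\times\mathbb{F}_{q^k}^*$ let $$U_{\tau,\delta}=\{u+(u^q+u)\tau\gamma+(u^q+u)\delta\gamma^2\mid u\in\mathbb{F}_{q^k}\},$$ and list these $(q^k-1)^2$ subspaces as $U_1,\dots,U_{(q^k-1)^2}$. Then the code $$\mathcal{C}=\bigcup_{i=1}^{(q^k-1)^2}\{\alpha U_i\mid\alpha\in\mathbb{F}_{q^n}^*\}$$ is a cyclic constant dimension subspace code with cardinality $(q^k-1)^2\frac{q^n-1}{q-1}$ and minimum distance $2k-2$.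
   Context: $\mathbb{F}_{q^n}$ is viewed as an $n$-dimensional vector space over $\mathbb{F}_q$. For $\mathbb{F}_q$-subspaces $U,V$ of $\mathbb{F}_{q^n}$, the subspace distance is $d(U,V)=\dim U+\dim V-2\dim(U\cap V)$. A subspace code is a nonempty set of $\mathbb{F}_q$-subspaces of $\mathbb{F}_{q^n}$; it is constant dimension if all its members have the same dimension; its minimum distance is $\min\{d(U,V)\mid U,V\in\mathcal{C},U\neq V\}$. The orbit of $U$ is $\{\alpha U\mid\alpha\in\mathbb{F}_{q^n}^*\}$, and a code is cyclic if it is a union of orbits. *)

theory Defs
  imports Main "HOL-Computational_Algebra.Polynomial" "HOL-Computational_Algebra.Primes"
begin

definition prime_power :: "nat \<Rightarrow> bool" where
  "prime_power q \<longleftrightarrow> (\<exists>p m. prime p \<and> m > 0 \<and> q = p ^ m)"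

definition subfield_of_order :: "nat \<Rightarrow> 'a::field set" where
  "subfield_of_order Q = {x. x ^ Q = x}"

definition Fq_span :: "nat \<Rightarrow> 'a::field set \<Rightarrow> 'a set" where
  "Fq_span q B = {(\<Sum>b\<in>B. c b * b) | c. \<forall>b\<in>B. c b \<in> subfield_of_order q}"

definition Fq_subspace :: "nat \<Rightarrow> 'a::field set \<Rightarrow> bool" where
  "Fq_subspace q U \<longleftrightarrow> 0 \<in> U \<and> (\<forall>x\<in>U. \<forall>y\<in>U. x + y \<in> U)
     \<and> (\<forall>c\<in>subfield_of_order q. \<forall>x\<in>U. c * x \<in> U)"

definition Fq_dim :: "nat \<Rightarrow> 'a::field set \<Rightarrow> nat" where
  "Fq_dim q U = (LEAST d. \<exists>B. B \<subseteq> U \<and> finite B \<and> card B = d \<and> Fq_span q B = U)"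

definition subspace_dist :: "nat \<Rightarrow> 'a::field set \<Rightarrow> 'a set \<Rightarrow> nat" where
  "subspace_dist q U V = Fq_dim q U + Fq_dim q V - 2 * Fq_dim q (U \<inter> V)"

definition subspace_code :: "nat \<Rightarrow> 'a::field set set \<Rightarrow> bool" where
  "subspace_code q C \<longleftrightarrow> C \<noteq> {} \<and> (\<forall>U\<in>C. Fq_subspace q U)"

definition constant_dimension :: "nat \<Rightarrow> 'a::field set set \<Rightarrow> bool" where
  "constant_dimension q C \<longleftrightarrow> (\<exists>d. \<forall>U\<in>C. Fq_dim q U = d)"

definition min_distance :: "nat \<Rightarrow> 'a::field set set \<Rightarrow> nat" where
  "min_distance q C = Min {subspace_dist q U V | U V. U \<in> C \<and> V \<in> C \<and> U \<noteq> V}"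

definition orbit :: "'a::field set \<Rightarrow> 'a set set" where
  "orbit U = {(\<lambda>x. \<alpha> * x) ` U | \<alpha>. \<alpha> \<noteq> 0}"

definition cyclic_code :: "'a::field set set \<Rightarrow> bool" where
  "cyclic_code C \<longleftrightarrow> (\<exists>S. C = (\<Union>U\<in>S. orbit U))"

definition irreducible_over :: "'a::field set \<Rightarrow> 'a poly \<Rightarrow> bool" where
  "irreducible_over K p \<longleftrightarrow> (\<forall>i. coeff p i \<in> K) \<and> degree p > 0 \<and>
     (\<forall>f g. (\<forall>i. coeff f i \<in> K) \<longrightarrow> (\<forall>i. coeff g i \<in> K) \<longrightarrow> p = f * g
        \<longrightarrow> degree f = 0 \<or> degree g = 0)"

definition U_td :: "nat \<Rightarrow> nat \<Rightarrow> 'a::field \<Rightarrow> 'a \<Rightarrow> 'a \<Rightarrow> 'a set" where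
  "U_td q k \<gamma> \<tau> \<delta> = (\<lambda>u. u + (u ^ q + u) * \<tau> * \<gamma> + (u ^ q + u) * \<delta> * \<gamma>\<^sup>2)
      ` subfield_of_order (q ^ k)"

end

theory Submission
  imports Defs "HOL-Library.FuncSet"
begin

(* Write K = F_{q^k} and L u = u^q + u, so that U_{tau,delta} is the image of the F_q-linear
   injection u |-> u + L(u) tau gamma + L(u) delta gamma^2 on K and has dimension k.
   Because gamma has degree r > 4 over K, the elements 1, gamma, ..., gamma^4 are K-linearly
   independent.  If alpha U_{tau,delta} and U_{tau',delta'} share two F_q-independent vectors,
   eliminating alpha and comparing the coefficients of gamma^0, ..., gamma^4 forces alpha to lie
   in F_q and (tau, delta) = (tau', delta').  Hence the (q^k - 1)^2 orbits are pairwise disjoint,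
   each has (q^n - 1)/(q - 1) members, and two distinct codewords meet in at most an F_q-line,
   so their distance is at least 2k - 2; an explicit pair meeting in a line attains it. *)

section \<open>Finite fields and their subfields\<close>

(* Lemma finite_field_power_card_eq_same needs sort finite_field, which a type variable of
   sort {field,finite} does not have. *)
lemma nonzero_power_card_UNIV_minus_1:
  fixes x :: "'a::{field,finite}"
  assumes "x \<noteq> 0"
  shows "x ^ (card (UNIV :: 'a set) - 1) = 1"
proof -
  let ?N = "UNIV - {0 :: 'a}"
  have "(\<Prod>y\<in>?N. x * y) = (\<Prod>y\<in>?N. y)"
    by (rule prod.reindex_bij_witness[of _ "\<lambda>y. y / x" "\<lambda>y. x * y"]) (use assms in auto)
  moreover have "(\<Prod>y\<in>?N. x * y) = x ^ card ?N * (\<Prod>y\<in>?N. y)"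
    by (simp add: prod.distrib)
  moreover have "(\<Prod>y\<in>?N. y) \<noteq> 0"
    by simp
  ultimately show ?thesis
    by (simp add: card_Diff_singleton)
qed

lemma card_roots_of_unity_le:
  assumes "d > 0"
  shows "card {x :: 'a::field. x ^ d = 1} \<le> d"
proof -
  let ?P = "monom (1::'a) d - 1"
  have "coeff ?P d = 1"
    using assms by (simp add: coeff_monom)
  then have "?P \<noteq> 0"
    by (metis coeff_0 zero_neq_one)
  then have "card {x. poly ?P x = 0} \<le> degree ?P"
    by (rule card_poly_roots_bound)
  moreover have "degree ?P \<le> d"
    by (intro degree_diff_le) (auto simp: degree_monom_le)
  ultimately show ?thesis
    by (simp add: poly_monom)
qed

lemma card_roots_geometric_sum_le:
  assumes "d > 0" and "e > 0"
  shows "card {x :: 'a::field. (\<Sum>i<e. (x ^ d) ^ i) = 0} \<le> d * (e - 1)"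
proof -
  let ?T = "\<Sum>i<e. monom (1::'a) (d * i)"
  have "coeff ?T 0 = (\<Sum>i<e. if i = 0 then 1 else 0)"
    using assms(1) by (auto simp: coeff_sum coeff_monom intro!: sum.cong)
  also have "\<dots> = 1"
    using assms(2) by simp
  finally have "?T \<noteq> 0"
    by auto
  then have "card {x. poly ?T x = 0} \<le> degree ?T"
    by (rule card_poly_roots_bound)
  moreover have "degree ?T \<le> d * (e - 1)"
    by (intro degree_sum_le) (auto intro!: order.trans[OF degree_monom_le])
  ultimately show ?thesis
    by (simp add: poly_sum poly_monom power_mult)
qed

lemma card_UNIV_field_ge_2: "card (UNIV :: 'a::{field,finite} set) \<ge> 2"
  using card_mono[of UNIV "{0, 1 :: 'a}"] by simp

lemma card_roots_of_unity:
  assumes "d dvd card (UNIV :: 'a::{field,finite} set) - 1"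
  shows "card {x :: 'a. x ^ d = 1} = d"
proof -
  obtain e where de: "card (UNIV :: 'a set) - 1 = d * e"
    using assms by blast
  have "d * e \<ge> 1"
    using de card_UNIV_field_ge_2[where 'a = 'a] by linarith
  then have "d > 0" "e > 0"
    by simp_all
  let ?R = "{x :: 'a. x ^ d = 1}" and ?Z = "{x :: 'a. (\<Sum>i<e. (x ^ d) ^ i) = 0}"
  have "UNIV - {0} \<subseteq> ?R \<union> ?Z"
  proof
    fix x :: 'a
    assume "x \<in> UNIV - {0}"
    then have "(x ^ d) ^ e - 1 = 0"
      using nonzero_power_card_UNIV_minus_1[of x] de by (simp flip: power_mult)
    then have "(x ^ d - 1) * (\<Sum>i<e. (x ^ d) ^ i) = 0"
      by (simp add: power_diff_1_eq)
    then show "x \<in> ?R \<union> ?Z"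
      by auto
  qed
  then have "d * e \<le> card ?R + card ?Z"
    using de card_mono[of "?R \<union> ?Z" "UNIV - {0}"] card_Un_le[of ?R ?Z]
    by (simp add: card_Diff_singleton)
  moreover have "card ?Z \<le> d * (e - 1)"
    by (rule card_roots_geometric_sum_le) fact+
  moreover have "d * e = d * (e - 1) + d"
    using \<open>e > 0\<close> by (cases e) auto
  ultimately show ?thesis
    using card_roots_of_unity_le[OF \<open>d > 0\<close>, where 'a = 'a] by linarith
qed

lemma card_subfield_of_order:
  assumes card_UNIV: "card (UNIV :: 'a::{field,finite} set) = Q ^ t"
  shows "card (subfield_of_order Q :: 'a set) = Q"
proof -
  have "Q > 1"
    using card_UNIV card_UNIV_field_ge_2[where 'a = 'a] power_le_one[of Q t] by (cases "Q \<le> 1") auto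
  have "int (Q ^ t - 1) = (int Q - 1) * (\<Sum>i<t. int Q ^ i)"
    using \<open>Q > 1\<close> by (simp add: of_nat_diff power_diff_1_eq)
  then have "Q - 1 dvd card (UNIV :: 'a set) - 1"
    using \<open>Q > 1\<close> card_UNIV by (metis dvd_triv_left int_dvd_int_iff of_nat_1 of_nat_diff less_imp_le_nat)
  then have "card {x :: 'a. x ^ (Q - 1) = 1} = Q - 1"
    by (rule card_roots_of_unity)
  moreover have "subfield_of_order Q = insert 0 {x :: 'a. x ^ (Q - 1) = 1}"
    using \<open>Q > 1\<close> unfolding subfield_of_order_def
    by (auto simp: power_eq_if[of _ Q] split: if_splits)
  moreover have "(0 :: 'a) \<notin> {x. x ^ (Q - 1) = 1}"
    using \<open>Q > 1\<close> by (simp add: power_0_left)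
  ultimately show ?thesis
    using \<open>Q > 1\<close> by simp
qed

lemma of_nat_card_UNIV_eq_0: "of_nat (card (UNIV :: 'a::{ring_1,finite} set)) = (0 :: 'a)"
proof -
  have "(\<Sum>y\<in>UNIV. y + 1) = (\<Sum>y::'a\<in>UNIV. y)"
    by (rule sum.reindex_bij_witness[of _ "\<lambda>y. y - 1" "\<lambda>y. y + 1"]) auto
  then show ?thesis
    by (simp add: sum.distrib)
qed

lemma prime_CHAR_finite_field: "prime CHAR('a::{field,finite})"
  by (simp add: finite_imp_CHAR_pos prime_CHAR_semidom)

lemma CHAR_eq_if_card_UNIV_eq_prime_power:
  assumes "prime P" and "card (UNIV :: 'a::{field,finite} set) = P ^ t"
  shows "CHAR('a) = P"
proof -
  have "of_nat (P ^ t) = (0 :: 'a)"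
    using of_nat_card_UNIV_eq_0[where 'a = 'a] assms(2) by simp
  then have "CHAR('a) dvd P ^ t"
    by (simp only: of_nat_eq_0_iff_char_dvd)
  then have "CHAR('a) dvd P"
    using prime_CHAR_finite_field[where 'a = 'a] prime_dvd_power by blast
  then show ?thesis
    using prime_CHAR_finite_field[where 'a = 'a] assms(1) by (simp add: primes_dvd_imp_eq)
qed

context
  fixes Q e :: nat
  assumes Q_power_CHAR: "Q = CHAR('a::{field,finite}) ^ e"
begin

lemma power_CHAR_power_add: "(x + y :: 'a) ^ Q = x ^ Q + y ^ Q"
  using prime_CHAR_finite_field Q_power_CHAR by (rule freshmans_dream')

lemma power_CHAR_power_pos: "Q > 0"
  using prime_CHAR_finite_field[where 'a = 'a] Q_power_CHAR by (simp add: prime_gt_0_nat)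

lemma power_CHAR_power_uminus: "(- x :: 'a) ^ Q = - (x ^ Q)"
  using power_CHAR_power_add[of x "- x"] power_CHAR_power_pos
  by (simp add: zero_power eq_neg_iff_add_eq_0 add.commute)

lemma zero_mem_subfield_of_order: "(0 :: 'a) \<in> subfield_of_order Q"
  using power_CHAR_power_pos by (simp add: subfield_of_order_def zero_power)

lemma subfield_of_order_add:
  "x \<in> subfield_of_order Q \<Longrightarrow> y \<in> subfield_of_order Q \<Longrightarrow> (x + y :: 'a) \<in> subfield_of_order Q"
  by (simp add: subfield_of_order_def power_CHAR_power_add)

lemma subfield_of_order_uminus:
  "x \<in> subfield_of_order Q \<Longrightarrow> (- x :: 'a) \<in> subfield_of_order Q"
  by (simp add: subfield_of_order_def power_CHAR_power_uminus)

lemma subfield_of_order_diff: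
  "x \<in> subfield_of_order Q \<Longrightarrow> y \<in> subfield_of_order Q \<Longrightarrow> (x - y :: 'a) \<in> subfield_of_order Q"
  using subfield_of_order_add[of x "- y"] subfield_of_order_uminus[of y] by simp

end

lemma one_mem_subfield_of_order: "(1 :: 'a::field) \<in> subfield_of_order Q"
  by (simp add: subfield_of_order_def)

lemma subfield_of_order_mult:
  "x \<in> subfield_of_order Q \<Longrightarrow> y \<in> subfield_of_order Q \<Longrightarrow> (x * y :: 'a::field) \<in> subfield_of_order Q"
  by (simp add: subfield_of_order_def power_mult_distrib)

lemma subfield_of_order_inverse:
  "x \<in> subfield_of_order Q \<Longrightarrow> (inverse x :: 'a::field) \<in> subfield_of_order Q"
  by (simp add: subfield_of_order_def power_inverse)

lemma subfield_of_order_divide: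
  "x \<in> subfield_of_order Q \<Longrightarrow> y \<in> subfield_of_order Q \<Longrightarrow> (x / y :: 'a::field) \<in> subfield_of_order Q"
  by (simp add: subfield_of_order_def power_divide)

lemma subfield_of_order_power:
  "x \<in> subfield_of_order Q \<Longrightarrow> (x ^ n :: 'a::field) \<in> subfield_of_order Q"
  by (induction n) (auto intro: subfield_of_order_mult one_mem_subfield_of_order)

lemma subfield_of_order_subset_power: "subfield_of_order Q \<subseteq> (subfield_of_order (Q ^ j) :: 'a::field set)"
proof
  fix x :: 'a
  assume "x \<in> subfield_of_order Q"
  then show "x \<in> subfield_of_order (Q ^ j)"
    by (induction j) (auto simp: subfield_of_order_def power_mult simp flip: power_Suc2)
qed

lemma exists_proportionality_factor:
  fixes a1 a2 b1 b2 :: "'a::field"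
  assumes "a1 * b2 = a2 * b1" and "b1 \<noteq> 0 \<or> b2 \<noteq> 0"
  obtains \<rho> where "a1 = \<rho> * b1" and "a2 = \<rho> * b2"
proof (cases "b1 = 0")
  case True
  then show ?thesis
    using assms by (intro that[of "a2 / b2"]) (simp_all add: field_simps)
next
  case False
  then show ?thesis
    using assms by (intro that[of "a1 / b1"]) (simp_all add: field_simps)
qed

section \<open>Linear algebra over F_q\<close>

lemma Fq_subspace_Fq_mult:
  "Fq_subspace q V \<Longrightarrow> c \<in> subfield_of_order q \<Longrightarrow> x \<in> V \<Longrightarrow> c * x \<in> V"
  unfolding Fq_subspace_def by blast

lemma Fq_subspace_Int:
  "Fq_subspace q U \<Longrightarrow> Fq_subspace q V \<Longrightarrow> Fq_subspace q (U \<inter> V)"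
  unfolding Fq_subspace_def by blast

lemma Fq_subspace_sum:
  assumes "Fq_subspace q U" and "\<And>b. b \<in> B \<Longrightarrow> f b \<in> U"
  shows "sum f B \<in> U"
  using assms(2)
proof (induction B rule: infinite_finite_induct)
  case (insert b B)
  then show ?case
    using assms(1) unfolding Fq_subspace_def by simp
qed (use assms(1) in \<open>auto simp: Fq_subspace_def\<close>)

lemma Fq_span_subset:
  assumes "Fq_subspace q U" and "B \<subseteq> U"
  shows "Fq_span q B \<subseteq> U"
proof
  fix s
  assume "s \<in> Fq_span q B"
  then obtain c where c: "\<forall>b\<in>B. c b \<in> subfield_of_order q" and s: "s = (\<Sum>b\<in>B. c b * b)"
    unfolding Fq_span_def by blast
  show "s \<in> U"
    unfolding s using assms c by (intro Fq_subspace_sum[OF assms(1)]) (auto simp: Fq_subspace_def)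
qed

lemma card_Fq_span_le:
  fixes B :: "'a::{field,finite} set"
  assumes "finite B"
  shows "card (Fq_span q B) \<le> card (subfield_of_order q :: 'a set) ^ card B"
proof -
  let ?Fq = "subfield_of_order q :: 'a set"
  have "Fq_span q B \<subseteq> (\<lambda>c. \<Sum>b\<in>B. c b * b) ` (B \<rightarrow>\<^sub>E ?Fq)"
  proof
    fix s
    assume "s \<in> Fq_span q B"
    then obtain c where c: "\<forall>b\<in>B. c b \<in> ?Fq" and s: "s = (\<Sum>b\<in>B. c b * b)"
      unfolding Fq_span_def by blast
    have "s = (\<Sum>b\<in>B. restrict c B b * b)"
      unfolding s by (intro sum.cong) auto
    then show "s \<in> (\<lambda>c. \<Sum>b\<in>B. c b * b) ` (B \<rightarrow>\<^sub>E ?Fq)"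
      using c by (intro image_eqI[of _ _ "restrict c B"]) auto
  qed
  then have "card (Fq_span q B) \<le> card ((\<lambda>c. \<Sum>b\<in>B. c b * b) ` (B \<rightarrow>\<^sub>E ?Fq))"
    by (intro card_mono) simp_all
  also have "\<dots> \<le> card (B \<rightarrow>\<^sub>E ?Fq)"
    using assms by (intro card_image_le finite_PiE) simp_all
  also have "\<dots> = card ?Fq ^ card B"
    using assms by (simp add: card_PiE)
  finally show ?thesis .
qed

lemma Fq_span_insert:
  assumes "finite B" and "x \<notin> B"
  shows "Fq_span q (insert x B) = (\<lambda>(s, a). s + a * x) ` (Fq_span q B \<times> subfield_of_order q)"
proof (intro set_eqI iffI)
  fix y
  assume "y \<in> Fq_span q (insert x B)"
  then obtain c where c: "\<forall>b\<in>insert x B. c b \<in> subfield_of_order q"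
    and y: "y = (\<Sum>b\<in>insert x B. c b * b)"
    unfolding Fq_span_def by blast
  have "y = (\<Sum>b\<in>B. c b * b) + c x * x"
    using y assms by (simp add: add.commute)
  moreover have "(\<Sum>b\<in>B. c b * b) \<in> Fq_span q B"
    using c unfolding Fq_span_def by auto
  ultimately show "y \<in> (\<lambda>(s, a). s + a * x) ` (Fq_span q B \<times> subfield_of_order q)"
    using c by force
next
  fix y
  assume "y \<in> (\<lambda>(s, a). s + a * x) ` (Fq_span q B \<times> subfield_of_order q)"
  then obtain s a where s: "s \<in> Fq_span q B" and a: "a \<in> subfield_of_order q" and y: "y = s + a * x"
    by auto
  then obtain c where c: "\<forall>b\<in>B. c b \<in> subfield_of_order q" and s_eq: "s = (\<Sum>b\<in>B. c b * b)"
    unfolding Fq_span_def by blast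
  have "(\<Sum>b\<in>B. (c(x := a)) b * b) = s"
    unfolding s_eq using assms(2) by (intro sum.cong) auto
  then have "y = (\<Sum>b\<in>insert x B. (c(x := a)) b * b)"
    using assms y by (simp add: add.commute)
  moreover have "\<forall>b\<in>insert x B. (c(x := a)) b \<in> subfield_of_order q"
    using a c by auto
  ultimately show "y \<in> Fq_span q (insert x B)"
    unfolding Fq_span_def by blast
qed

lemma Fq_subspace_scale:
  fixes V :: "'a::field set"
  assumes "Fq_subspace q V"
  shows "Fq_subspace q ((*) a ` V)"
  unfolding Fq_subspace_def
proof (intro conjI ballI)
  show "0 \<in> (*) a ` V"
    using assms unfolding Fq_subspace_def by (force simp: image_iff)
next
  fix x y
  assume "x \<in> (*) a ` V" "y \<in> (*) a ` V"
  then show "x + y \<in> (*) a ` V"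
    using assms unfolding Fq_subspace_def by (auto simp flip: distrib_left)
next
  fix c x :: 'a
  assume "c \<in> subfield_of_order q" "x \<in> (*) a ` V"
  then show "c * x \<in> (*) a ` V"
    using assms unfolding Fq_subspace_def by (auto simp: mult.left_commute[of c])
qed

lemma Fq_subspace_scale_eq:
  assumes "Fq_subspace q V" and "c \<in> subfield_of_order q" and "c \<noteq> 0"
  shows "(*) c ` V = V"
proof
  show "(*) c ` V \<subseteq> V"
    using assms unfolding Fq_subspace_def by auto
  show "V \<subseteq> (*) c ` V"
  proof
    fix x
    assume "x \<in> V"
    then have "inverse c * x \<in> V"
      using assms subfield_of_order_inverse unfolding Fq_subspace_def by blast
    then show "x \<in> (*) c ` V"
      using assms(3) by (force simp: image_iff)
  qed
qed

lemma exists_Fq_independent_pair: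
  fixes V :: "'a::{field,finite} set"
  assumes "Fq_subspace q V" and "card (subfield_of_order q :: 'a set) < card V"
  shows "\<exists>x1\<in>V. \<exists>x2\<in>V. x1 \<noteq> 0 \<and> x2 \<notin> (\<lambda>c. c * x1) ` subfield_of_order q"
proof -
  have "V \<noteq> {0}"
    using assms(2) card_mono[of "subfield_of_order q" "{1 :: 'a}"]
    by (auto simp: one_mem_subfield_of_order)
  moreover have "0 \<in> V"
    using assms(1) unfolding Fq_subspace_def by blast
  ultimately obtain x1 where x1: "x1 \<in> V" "x1 \<noteq> 0"
    by blast
  have "card ((\<lambda>c. c * x1) ` subfield_of_order q) < card V"
    using assms(2) card_image_le[of "subfield_of_order q" "\<lambda>c. c * x1"] by simp
  then have "\<not> V \<subseteq> (\<lambda>c. c * x1) ` subfield_of_order q"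
    using card_mono[of "(\<lambda>c. c * x1) ` subfield_of_order q" V] by auto
  then obtain x2 where "x2 \<in> V" "x2 \<notin> (\<lambda>c. c * x1) ` subfield_of_order q"
    by blast
  then show ?thesis
    using x1 by blast
qed

context
  fixes q e :: nat
  assumes q_power_CHAR: "q = CHAR('a::{field,finite}) ^ e"
begin

lemma two_le_card_subfield_of_order: "card (subfield_of_order q :: 'a set) \<ge> 2"
  using card_mono[of "subfield_of_order q" "{0, 1 :: 'a}"]
    zero_mem_subfield_of_order[OF q_power_CHAR] one_mem_subfield_of_order[of q, where 'a = 'a]
  by simp

lemma Fq_subspace_Fq_span: "Fq_subspace q (Fq_span q (B :: 'a set))"
  unfolding Fq_subspace_def
proof (intro conjI ballI)
  show "0 \<in> Fq_span q B"
    unfolding Fq_span_def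
    using zero_mem_subfield_of_order[OF q_power_CHAR] by (auto intro!: exI[of _ "\<lambda>_. 0"])
next
  fix x y
  assume "x \<in> Fq_span q B" "y \<in> Fq_span q B"
  then obtain c d where "\<forall>b\<in>B. c b \<in> subfield_of_order q" "x = (\<Sum>b\<in>B. c b * b)"
    and "\<forall>b\<in>B. d b \<in> subfield_of_order q" "y = (\<Sum>b\<in>B. d b * b)"
    unfolding Fq_span_def by blast
  then show "x + y \<in> Fq_span q B"
    unfolding Fq_span_def
    by (auto simp: sum.distrib distrib_right intro!: exI[of _ "\<lambda>b. c b + d b"]
        subfield_of_order_add[OF q_power_CHAR])
next
  fix a x :: 'a
  assume "a \<in> subfield_of_order q" "x \<in> Fq_span q B"
  then obtain c where "\<forall>b\<in>B. c b \<in> subfield_of_order q" "x = (\<Sum>b\<in>B. c b * b)"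
    unfolding Fq_span_def by blast
  then show "a * x \<in> Fq_span q B"
    using \<open>a \<in> subfield_of_order q\<close> unfolding Fq_span_def
    by (auto simp: sum_distrib_left mult.assoc intro!: exI[of _ "\<lambda>b. a * c b"]
        subfield_of_order_mult)
qed

lemma mem_Fq_span:
  assumes "finite B" and "x \<in> B"
  shows "x \<in> Fq_span q (B :: 'a set)"
proof -
  let ?c = "\<lambda>b. if b = x then 1 else 0 :: 'a"
  have "(\<Sum>b\<in>B. ?c b * b) = x"
    using assms by (simp add: if_distrib[of "\<lambda>c. c * _"] cong: if_cong)
  moreover have "\<forall>b\<in>B. ?c b \<in> subfield_of_order q"
    using zero_mem_subfield_of_order[OF q_power_CHAR] one_mem_subfield_of_order by auto
  ultimately show ?thesis
    unfolding Fq_span_def mem_Collect_eq by (intro exI[of _ ?c]) simp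
qed

lemma card_Fq_span_insert:
  fixes B :: "'a set"
  assumes "finite B" and "x \<notin> Fq_span q B"
  shows "card (Fq_span q (insert x B)) = card (Fq_span q B) * card (subfield_of_order q :: 'a set)"
proof -
  let ?Fq = "subfield_of_order q :: 'a set"
  have "inj_on (\<lambda>(s, a). s + a * x) (Fq_span q B \<times> ?Fq)"
  proof (rule inj_onI, clarsimp)
    fix s a s' a'
    assume s: "s \<in> Fq_span q B" "s' \<in> Fq_span q B" and a: "a \<in> ?Fq" "a' \<in> ?Fq"
      and eq: "s + a * x = s' + a' * x"
    show "s = s' \<and> a = a'"
    proof (cases "a = a'")
      case False
      have "(a - a') * x = s' - s"
        using eq by (simp add: algebra_simps)
      have "x = inverse (a - a') * ((a - a') * x)"
        using False by simp
      also have "\<dots> = inverse (a - a') * (s' + (- 1) * s)"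
        using \<open>(a - a') * x = s' - s\<close> by simp
      also have "\<dots> \<in> Fq_span q B"
        using Fq_subspace_Fq_span s a unfolding Fq_subspace_def
        by (meson subfield_of_order_inverse subfield_of_order_diff[OF q_power_CHAR]
            subfield_of_order_uminus[OF q_power_CHAR] one_mem_subfield_of_order)
      finally show ?thesis
        using assms(2) by simp
    qed (use eq in simp)
  qed
  moreover have "x \<notin> B"
    using assms mem_Fq_span by blast
  ultimately show ?thesis
    using assms(1) by (simp add: Fq_span_insert card_image card_cartesian_product)
qed

lemma exists_subset_card_Fq_span:
  fixes U :: "'a set"
  assumes U: "Fq_subspace q U" and card_Fq: "card (subfield_of_order q :: 'a set) = q"
    and card_U: "card U = q ^ d" and "j \<le> d"
  shows "\<exists>B\<subseteq>U. finite B \<and> card B = j \<and> card (Fq_span q B) = q ^ j"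
  using \<open>j \<le> d\<close>
proof (induction j)
  case 0
  have "Fq_span q {} = {0 :: 'a}"
    unfolding Fq_span_def by simp
  then show ?case
    by (intro exI[of _ "{}"]) auto
next
  case (Suc j)
  then obtain B where B: "B \<subseteq> U" "finite B" "card B = j" "card (Fq_span q B) = q ^ j"
    by auto
  have "q > 1"
    using card_Fq two_le_card_subfield_of_order by simp
  then have "card (Fq_span q B) < card U"
    using B(4) card_U Suc.prems by simp
  moreover have "Fq_span q B \<subseteq> U"
    using Fq_span_subset[OF U B(1)] .
  ultimately obtain x where x: "x \<in> U" "x \<notin> Fq_span q B"
    by (metis card_mono finite subsetI leD)
  have "x \<notin> B"
    using x(2) mem_Fq_span[OF B(2)] by blast
  moreover have "card (Fq_span q (insert x B)) = q ^ Suc j"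
    using card_Fq_span_insert[OF B(2) x(2)] B(4) card_Fq by simp
  ultimately show ?case
    using B x by (intro exI[of _ "insert x B"]) simp
qed

lemma Fq_dim_eq_if_card:
  fixes U :: "'a set"
  assumes U: "Fq_subspace q U" and card_Fq: "card (subfield_of_order q :: 'a set) = q"
    and card_U: "card U = q ^ d"
  shows "Fq_dim q U = d"
  unfolding Fq_dim_def
proof (rule Least_equality)
  obtain B where B: "B \<subseteq> U" "finite B" "card B = d" "card (Fq_span q B) = q ^ d"
    using exists_subset_card_Fq_span[OF U card_Fq card_U order.refl] by blast
  have "Fq_span q B = U"
    using Fq_span_subset[OF U B(1)] B(4) card_U by (intro card_subset_eq) simp_all
  with B show "\<exists>B. B \<subseteq> U \<and> finite B \<and> card B = d \<and> Fq_span q B = U"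
    by blast
next
  fix d'
  assume "\<exists>B. B \<subseteq> U \<and> finite B \<and> card B = d' \<and> Fq_span q B = U"
  then obtain B where B: "finite B" "card B = d'" "Fq_span q B = U"
    by blast
  have "q ^ d \<le> q ^ d'"
    using card_Fq_span_le[OF B(1), of q] unfolding B(2,3) card_Fq card_U .
  moreover have "q > 1"
    using card_Fq two_le_card_subfield_of_order by simp
  ultimately show "d \<le> d'"
    by (rule power_le_imp_le_exp[rotated])
qed

end

section \<open>Roots of irreducible polynomials over a subfield\<close>

context
  fixes Q e :: nat
  assumes Q_power_CHAR: "Q = CHAR('a::{field,finite}) ^ e"
begin

lemma subfield_of_order_poly_cancel_lead_coeff:
  fixes f h :: "'a poly"
  assumes "h \<noteq> 0" and h: "\<forall>i. coeff h i \<in> subfield_of_order Q"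
    and f: "\<forall>i. coeff f i \<in> subfield_of_order Q" and "degree h \<le> degree f"
  defines "g \<equiv> f - monom (lead_coeff f / lead_coeff h) (degree f - degree h) * h"
  shows "\<forall>i. coeff g i \<in> subfield_of_order Q" and "g = 0 \<or> degree g < degree f"
proof -
  define c where "c = lead_coeff f / lead_coeff h"
  have c: "c \<in> subfield_of_order Q"
    unfolding c_def using f h by (intro subfield_of_order_divide) auto
  show "\<forall>i. coeff g i \<in> subfield_of_order Q"
    unfolding g_def c_def[symmetric] using f h c zero_mem_subfield_of_order[OF Q_power_CHAR]
    by (auto simp: coeff_monom_mult intro!: subfield_of_order_diff[OF Q_power_CHAR] subfield_of_order_mult)
  have "coeff g (degree f) = 0"
    using assms(1,4) by (simp add: g_def coeff_monom_mult)
  moreover have "degree g \<le> degree f"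
    unfolding g_def using assms(4) degree_mult_le[of "monom c (degree f - degree h)" h]
      degree_monom_le[of c "degree f - degree h"]
    by (intro degree_diff_le) (auto simp: c_def)
  ultimately show "g = 0 \<or> degree g < degree f"
    by (metis leading_coeff_0_iff le_neq_implies_less)
qed

lemma subfield_of_order_poly_div_mod:
  fixes f h :: "'a poly"
  assumes "h \<noteq> 0" and h: "\<forall>i. coeff h i \<in> subfield_of_order Q"
    and "\<forall>i. coeff f i \<in> subfield_of_order Q"
  shows "\<exists>s t. (\<forall>i. coeff s i \<in> subfield_of_order Q) \<and> (\<forall>i. coeff t i \<in> subfield_of_order Q)
           \<and> f = h * s + t \<and> (t = 0 \<or> degree t < degree h)"
  using assms(3)
proof (induction "degree f" arbitrary: f rule: less_induct)
  case less
  show ?case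
  proof (cases "f = 0 \<or> degree f < degree h")
    case True
    then show ?thesis
      using less.prems zero_mem_subfield_of_order[OF Q_power_CHAR] by (intro exI[of _ 0] exI[of _ f]) auto
  next
    case False
    define c where "c = lead_coeff f / lead_coeff h"
    define n where "n = degree f - degree h"
    define g where "g = f - monom c n * h"
    have c: "c \<in> subfield_of_order Q"
      unfolding c_def using less.prems h by (intro subfield_of_order_divide) auto
    have g: "\<forall>i. coeff g i \<in> subfield_of_order Q" and "g = 0 \<or> degree g < degree f"
      using subfield_of_order_poly_cancel_lead_coeff[OF \<open>h \<noteq> 0\<close> h less.prems] False
      unfolding g_def c_def n_def by simp_all
    then have "\<exists>s t. (\<forall>i. coeff s i \<in> subfield_of_order Q) \<and> (\<forall>i. coeff t i \<in> subfield_of_order Q)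
                 \<and> g = h * s + t \<and> (t = 0 \<or> degree t < degree h)"
    proof (cases "g = 0")
      case True
      then show ?thesis
        using zero_mem_subfield_of_order[OF Q_power_CHAR] by (intro exI[of _ 0]) simp
    qed (use less.hyps[OF _ g] \<open>g = 0 \<or> degree g < degree f\<close> in blast)
    then obtain s t where s: "\<forall>i. coeff s i \<in> subfield_of_order Q" and t: "\<forall>i. coeff t i \<in> subfield_of_order Q"
      and g_eq: "g = h * s + t" and deg_t: "t = 0 \<or> degree t < degree h"
      by blast
    have "f = h * (s + monom c n) + t"
      using g_eq unfolding g_def by (simp add: algebra_simps)
    moreover have "\<forall>i. coeff (s + monom c n) i \<in> subfield_of_order Q"
      using s c zero_mem_subfield_of_order[OF Q_power_CHAR]
      by (auto simp: coeff_monom intro: subfield_of_order_add[OF Q_power_CHAR])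
    ultimately show ?thesis
      using t deg_t by blast
  qed
qed

lemma irreducible_over_degree_le:
  fixes p g :: "'a poly"
  assumes irr: "irreducible_over (subfield_of_order Q) p" and "poly p \<gamma> = 0"
    and "g \<noteq> 0" and "\<forall>i. coeff g i \<in> subfield_of_order Q" and "poly g \<gamma> = 0"
  shows "degree p \<le> degree g"
proof -
  let ?vanishing = "\<lambda>h. h \<noteq> 0 \<and> (\<forall>i. coeff h i \<in> subfield_of_order Q) \<and> poly h \<gamma> = 0"
  obtain h where "?vanishing h" and h_min: "\<And>f. ?vanishing f \<Longrightarrow> degree h \<le> degree f"
    using ex_has_least_nat[of ?vanishing g degree] assms(3-5) by blast
  then have h: "h \<noteq> 0" "\<forall>i. coeff h i \<in> subfield_of_order Q" "poly h \<gamma> = 0"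
    by blast+
  have p: "\<forall>i. coeff p i \<in> subfield_of_order Q" "degree p > 0"
    and p_factor: "\<forall>f g. (\<forall>i. coeff f i \<in> subfield_of_order Q) \<longrightarrow> (\<forall>i. coeff g i \<in> subfield_of_order Q)
                     \<longrightarrow> p = f * g \<longrightarrow> degree f = 0 \<or> degree g = 0"
    using irr by (simp_all add: irreducible_over_def)
  obtain s t where s: "\<forall>i. coeff s i \<in> subfield_of_order Q" and t: "\<forall>i. coeff t i \<in> subfield_of_order Q"
    and p_eq: "p = h * s + t" and deg_t: "t = 0 \<or> degree t < degree h"
    using subfield_of_order_poly_div_mod[OF h(1,2) p(1)] by blast
  have "poly t \<gamma> = 0"
    using \<open>poly p \<gamma> = 0\<close> h(3) p_eq by simp
  then have "t = 0"
    using deg_t h_min t by fastforce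
  then have "p = h * s"
    using p_eq by simp
  then have "degree h = 0 \<or> degree s = 0"
    using p_factor h(2) s by (metis (no_types))
  moreover have "degree h \<noteq> 0"
  proof
    assume "degree h = 0"
    then have "h = [:coeff h 0:]"
      by (simp add: degree_0_id)
    moreover have "poly [:coeff h 0:] \<gamma> = coeff h 0"
      by simp
    ultimately show False
      using h(1,3) by (metis pCons_0_0)
  qed
  moreover have "s \<noteq> 0"
    using \<open>p = h * s\<close> p(2) by auto
  ultimately have "degree p = degree h"
    using \<open>p = h * s\<close> h by (simp add: degree_mult_eq)
  then show ?thesis
    using h_min assms(3-5) by simp
qed

lemma irreducible_over_root_powers_independent:
  fixes p :: "'a poly"
  assumes irr: "irreducible_over (subfield_of_order Q) p" and "poly p \<gamma> = 0"
    and "m \<le> degree p" and c: "\<forall>i<m. c i \<in> subfield_of_order Q" and "(\<Sum>i<m. c i * \<gamma> ^ i) = 0"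
  shows "\<forall>i<m. c i = 0"
proof (rule ccontr)
  assume "\<not> (\<forall>i<m. c i = 0)"
  then obtain j where j: "j < m" "c j \<noteq> 0"
    by blast
  define g where "g = (\<Sum>i<m. monom (c i) i)"
  have coeff_g: "coeff g i = (if i < m then c i else 0)" for i
    unfolding g_def by (simp add: coeff_sum coeff_monom)
  have "g \<noteq> 0"
    using j coeff_g[of j] by auto
  moreover have "\<forall>i. coeff g i \<in> subfield_of_order Q"
    using c zero_mem_subfield_of_order[OF Q_power_CHAR] by (simp add: coeff_g)
  moreover have "poly g \<gamma> = 0"
    using assms(5) by (simp add: g_def poly_sum poly_monom)
  ultimately have "degree p \<le> degree g"
    by (rule irreducible_over_degree_le[OF irr \<open>poly p \<gamma> = 0\<close>])
  moreover have "degree g \<le> m - 1"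
    using coeff_g by (intro degree_le) auto
  ultimately show False
    using assms(3) j by linarith
qed

end

section \<open>The subspaces U_td and the code\<close>

lemma mem_orbit_iff: "V \<in> orbit U \<longleftrightarrow> (\<exists>\<alpha>. \<alpha> \<noteq> 0 \<and> V = (*) \<alpha> ` U)"
  by (auto simp: orbit_def)

locale U_td_code =
  fixes q e k :: nat and \<gamma> :: "'a::{field,finite}"
  assumes q_power_CHAR: "q = CHAR('a) ^ e"
    and card_Fq: "card (subfield_of_order q :: 'a set) = q"
    and card_K: "card (subfield_of_order (q ^ k) :: 'a set) = q ^ k"
    and two_le_k: "2 \<le> k"
    \<comment> \<open>the only consequence of deg gamma = r > 4 that the construction uses\<close>
    and gamma_powers_independent:
      "\<And>c. \<forall>i<5. c i \<in> subfield_of_order (q ^ k) \<Longrightarrow> (\<Sum>i<5. c i * \<gamma> ^ i) = 0 \<Longrightarrow> \<forall>i<5. c i = 0"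
begin

abbreviation Fq :: "'a set" where "Fq \<equiv> subfield_of_order q"

abbreviation K :: "'a set" where "K \<equiv> subfield_of_order (q ^ k)"

lemma K_power_CHAR: "q ^ k = CHAR('a) ^ (e * k)"
  by (simp add: q_power_CHAR power_mult)

lemma zero_mem_Fq: "0 \<in> Fq"
  by (rule zero_mem_subfield_of_order[OF q_power_CHAR])

lemma zero_mem_K: "0 \<in> K"
  by (rule zero_mem_subfield_of_order[OF K_power_CHAR])

lemma one_mem_K: "1 \<in> K"
  by (rule one_mem_subfield_of_order)

lemma K_add: "x \<in> K \<Longrightarrow> y \<in> K \<Longrightarrow> x + y \<in> K"
  by (rule subfield_of_order_add[OF K_power_CHAR])

lemma K_diff: "x \<in> K \<Longrightarrow> y \<in> K \<Longrightarrow> x - y \<in> K"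
  by (rule subfield_of_order_diff[OF K_power_CHAR])

lemma q_gt_1: "q > 1"
  using card_Fq two_le_card_subfield_of_order[OF q_power_CHAR] by simp

lemma q_less_power_k: "q < q ^ k"
  using q_gt_1 two_le_k power_strict_increasing[of 1 k q] by simp

lemma Fq_subset_K: "Fq \<subseteq> K"
  by (rule subfield_of_order_subset_power)

lemma gamma_degree_4_independent:
  assumes "a0 \<in> K" "a1 \<in> K" "a2 \<in> K" "a3 \<in> K" "a4 \<in> K"
    and "a0 + a1 * \<gamma> + a2 * \<gamma>\<^sup>2 + a3 * \<gamma> ^ 3 + a4 * \<gamma> ^ 4 = 0"
  shows "a0 = 0 \<and> a1 = 0 \<and> a2 = 0 \<and> a3 = 0 \<and> a4 = 0"
proof -
  define c where "c = (!) [a0, a1, a2, a3, a4]"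
  have "\<forall>i<5. c i \<in> K"
    using assms(1-5) by (auto simp: c_def less_Suc_eq numeral_eq_Suc)
  moreover have "(\<Sum>i<5. c i * \<gamma> ^ i) = 0"
    using assms(6) by (simp add: c_def numeral_eq_Suc lessThan_Suc add_ac)
  ultimately have "\<forall>i<5. c i = 0"
    by (rule gamma_powers_independent)
  then show ?thesis
    unfolding c_def by (auto dest: spec[of _ 0] spec[of _ 1] spec[of _ 2] spec[of _ 3] spec[of _ 4])
qed

definition Lq :: "'a \<Rightarrow> 'a" where
  "Lq u = u ^ q + u"

definition U_vec :: "'a \<Rightarrow> 'a \<Rightarrow> 'a \<Rightarrow> 'a" where
  "U_vec \<tau> \<delta> u = u + Lq u * \<tau> * \<gamma> + Lq u * \<delta> * \<gamma>\<^sup>2"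

lemma U_td_eq_image: "U_td q k \<gamma> \<tau> \<delta> = U_vec \<tau> \<delta> ` K"
  by (simp add: U_td_def U_vec_def Lq_def)

lemma Lq_mem_K: "u \<in> K \<Longrightarrow> Lq u \<in> K"
  unfolding Lq_def by (intro K_add subfield_of_order_power)

lemma Lq_0: "Lq 0 = 0"
  using q_gt_1 by (simp add: Lq_def)

lemma Lq_add: "Lq (u + v) = Lq u + Lq v"
  by (simp add: Lq_def power_CHAR_power_add[OF q_power_CHAR] algebra_simps)

lemma Lq_Fq_mult: "c \<in> Fq \<Longrightarrow> Lq (c * u) = c * Lq u"
  by (simp add: Lq_def subfield_of_order_def power_mult_distrib distrib_left)

lemma U_vec_add: "U_vec \<tau> \<delta> (u + v) = U_vec \<tau> \<delta> u + U_vec \<tau> \<delta> v"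
  by (simp add: U_vec_def Lq_add algebra_simps)

lemma U_vec_Fq_mult: "c \<in> Fq \<Longrightarrow> U_vec \<tau> \<delta> (c * u) = c * U_vec \<tau> \<delta> u"
  by (simp add: U_vec_def Lq_Fq_mult algebra_simps)

lemma U_vec_eq_0_iff:
  assumes "u \<in> K" "\<tau> \<in> K" "\<delta> \<in> K"
  shows "U_vec \<tau> \<delta> u = 0 \<longleftrightarrow> u = 0"
proof
  assume "U_vec \<tau> \<delta> u = 0"
  then have "u + (Lq u * \<tau>) * \<gamma> + (Lq u * \<delta>) * \<gamma>\<^sup>2 + 0 * \<gamma> ^ 3 + 0 * \<gamma> ^ 4 = 0"
    by (simp add: U_vec_def)
  moreover have "Lq u * \<tau> \<in> K" "Lq u * \<delta> \<in> K" "(0 :: 'a) \<in> K"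
    using assms by (simp_all add: Lq_mem_K subfield_of_order_mult zero_mem_K)
  ultimately show "u = 0"
    using gamma_degree_4_independent assms(1) by blast
qed (simp add: U_vec_def Lq_0)

lemma inj_on_U_vec:
  assumes "\<tau> \<in> K" "\<delta> \<in> K"
  shows "inj_on (U_vec \<tau> \<delta>) K"
proof (rule inj_onI)
  fix u v
  assume "u \<in> K" "v \<in> K" "U_vec \<tau> \<delta> u = U_vec \<tau> \<delta> v"
  then have "U_vec \<tau> \<delta> (u - v) = 0"
    using U_vec_add[of \<tau> \<delta> "u - v" v] by simp
  moreover have "u - v \<in> K"
    using \<open>u \<in> K\<close> \<open>v \<in> K\<close> by (rule K_diff)
  ultimately show "u = v"
    using U_vec_eq_0_iff assms by simp
qed

lemma Fq_subspace_U_td: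
  assumes "\<tau> \<in> K" "\<delta> \<in> K"
  shows "Fq_subspace q (U_td q k \<gamma> \<tau> \<delta>)"
  unfolding Fq_subspace_def U_td_eq_image
proof (intro conjI ballI)
  show "0 \<in> U_vec \<tau> \<delta> ` K"
    using U_vec_eq_0_iff[OF zero_mem_K assms] zero_mem_K by (metis image_eqI)
next
  fix x y
  assume "x \<in> U_vec \<tau> \<delta> ` K" "y \<in> U_vec \<tau> \<delta> ` K"
  then obtain u v where "u \<in> K" "v \<in> K" "x = U_vec \<tau> \<delta> u" "y = U_vec \<tau> \<delta> v"
    by blast
  then show "x + y \<in> U_vec \<tau> \<delta> ` K"
    using K_add by (simp add: image_iff flip: U_vec_add) blast
next
  fix c x
  assume "c \<in> Fq" "x \<in> U_vec \<tau> \<delta> ` K"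
  then obtain u where "u \<in> K" "x = U_vec \<tau> \<delta> u"
    by blast
  moreover have "c * u \<in> K"
    using \<open>c \<in> Fq\<close> \<open>u \<in> K\<close> Fq_subset_K by (blast intro: subfield_of_order_mult)
  ultimately show "c * x \<in> U_vec \<tau> \<delta> ` K"
    using \<open>c \<in> Fq\<close> by (metis U_vec_Fq_mult image_eqI)
qed

lemma card_U_td:
  assumes "\<tau> \<in> K" "\<delta> \<in> K"
  shows "card (U_td q k \<gamma> \<tau> \<delta>) = q ^ k"
  unfolding U_td_eq_image using card_image[OF inj_on_U_vec[OF assms]] card_K by simp

(* Eliminating alpha from alpha x1 = y1 and alpha x2 = y2 gives y1 x2 = y2 x1, a polynomial
   identity of degree 4 in gamma with coefficients in K. *)
lemma U_vec_cross_coefficients: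
  assumes K: "u1 \<in> K" "u2 \<in> K" "w1 \<in> K" "w2 \<in> K" "\<tau> \<in> K" "\<delta> \<in> K" "\<tau>' \<in> K" "\<delta>' \<in> K"
    and "\<delta> \<noteq> 0" "\<delta>' \<noteq> 0"
    and cross: "U_vec \<tau>' \<delta>' w1 * U_vec \<tau> \<delta> u2 = U_vec \<tau>' \<delta>' w2 * U_vec \<tau> \<delta> u1"
  shows "w1 * u2 = w2 * u1" and "Lq w1 * Lq u2 = Lq w2 * Lq u1"
    and "(w1 * Lq u2 - w2 * Lq u1) * \<tau> + (Lq w1 * u2 - Lq w2 * u1) * \<tau>' = 0"
    and "(w1 * Lq u2 - w2 * Lq u1) * \<delta> + (Lq w1 * u2 - Lq w2 * u1) * \<delta>' = 0"
proof -
  define \<Delta> where "\<Delta> = Lq w1 * Lq u2 - Lq w2 * Lq u1"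
  define c0 where "c0 = w1 * u2 - w2 * u1"
  define c1 where "c1 = (w1 * Lq u2 - w2 * Lq u1) * \<tau> + (Lq w1 * u2 - Lq w2 * u1) * \<tau>'"
  define c2 where "c2 = (w1 * Lq u2 - w2 * Lq u1) * \<delta> + (Lq w1 * u2 - Lq w2 * u1) * \<delta>' + \<Delta> * \<tau>' * \<tau>"
  define c3 where "c3 = \<Delta> * (\<tau>' * \<delta> + \<delta>' * \<tau>)"
  define c4 where "c4 = \<Delta> * \<delta>' * \<delta>"
  have "c0 + c1 * \<gamma> + c2 * \<gamma>\<^sup>2 + c3 * \<gamma> ^ 3 + c4 * \<gamma> ^ 4
      = U_vec \<tau>' \<delta>' w1 * U_vec \<tau> \<delta> u2 - U_vec \<tau>' \<delta>' w2 * U_vec \<tau> \<delta> u1"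
    unfolding c0_def c1_def c2_def c3_def c4_def \<Delta>_def U_vec_def
    by (simp add: eval_nat_numeral algebra_simps)
  also have "\<dots> = 0"
    using cross by simp
  finally have "c0 = 0 \<and> c1 = 0 \<and> c2 = 0 \<and> c3 = 0 \<and> c4 = 0"
    by (rule gamma_degree_4_independent[rotated 5])
      (use K in \<open>simp_all add: c0_def c1_def c2_def c3_def c4_def \<Delta>_def Lq_mem_K
        K_add K_diff subfield_of_order_mult\<close>)
  moreover from this have "\<Delta> = 0"
    using \<open>\<delta> \<noteq> 0\<close> \<open>\<delta>' \<noteq> 0\<close> by (simp add: c4_def)
  ultimately show "w1 * u2 = w2 * u1" "Lq w1 * Lq u2 = Lq w2 * Lq u1"
    "(w1 * Lq u2 - w2 * Lq u1) * \<tau> + (Lq w1 * u2 - Lq w2 * u1) * \<tau>' = 0"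
    "(w1 * Lq u2 - w2 * Lq u1) * \<delta> + (Lq w1 * u2 - Lq w2 * u1) * \<delta>' = 0"
    by (simp_all add: c0_def c1_def c2_def \<Delta>_def)
qed

lemma Lq_proportional_imp_Fq:
  assumes "u1 \<noteq> 0" and indep: "u1 * u2 ^ q \<noteq> u2 * u1 ^ q"
    and "Lq (\<mu> * u1) = \<rho> * Lq u1" "Lq (\<mu> * u2) = \<rho> * Lq u2"
  shows "\<mu> ^ q = \<mu> \<and> \<rho> = \<mu>"
proof -
  have twisted: "(\<mu> ^ q - \<rho>) * u ^ q = (\<rho> - \<mu>) * u" if "Lq (\<mu> * u) = \<rho> * Lq u" for u
    using that by (simp add: Lq_def power_mult_distrib algebra_simps)
  have "\<rho> = \<mu> ^ q"
  proof (rule ccontr)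
    assume "\<rho> \<noteq> \<mu> ^ q"
    then have "u ^ q = (\<rho> - \<mu>) / (\<mu> ^ q - \<rho>) * u" if "Lq (\<mu> * u) = \<rho> * Lq u" for u
      using twisted[OF that] by (simp add: field_simps)
    then have "u1 * u2 ^ q = u2 * u1 ^ q"
      using assms(3,4) by (simp add: algebra_simps)
    then show False
      using indep by simp
  qed
  moreover have "(\<mu> ^ q - \<mu>) * u1 = 0"
    using twisted[OF assms(3)] \<open>\<rho> = \<mu> ^ q\<close> by simp
  ultimately show ?thesis
    using \<open>u1 \<noteq> 0\<close> by simp
qed

(* The hypothesis indep says that u2 / u1 is not in F_q. *)
lemma U_vec_scaled_pair_rigid:
  assumes K: "u1 \<in> K" "u2 \<in> K" "w1 \<in> K" "w2 \<in> K" "\<tau> \<in> K" "\<delta> \<in> K" "\<tau>' \<in> K" "\<delta>' \<in> K"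
    and "\<delta> \<noteq> 0" "\<delta>' \<noteq> 0" "\<alpha> \<noteq> 0"
    and y1: "\<alpha> * U_vec \<tau> \<delta> u1 = U_vec \<tau>' \<delta>' w1" and y2: "\<alpha> * U_vec \<tau> \<delta> u2 = U_vec \<tau>' \<delta>' w2"
    and indep: "u1 * u2 ^ q \<noteq> u2 * u1 ^ q"
  shows "\<alpha> \<in> Fq \<and> \<tau> = \<tau>' \<and> \<delta> = \<delta>'"
proof -
  have "U_vec \<tau>' \<delta>' w1 * U_vec \<tau> \<delta> u2 = U_vec \<tau>' \<delta>' w2 * U_vec \<tau> \<delta> u1"
    unfolding y1[symmetric] y2[symmetric] by (simp add: algebra_simps)
  note coeffs = U_vec_cross_coefficients[OF K \<open>\<delta> \<noteq> 0\<close> \<open>\<delta>' \<noteq> 0\<close> this]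
  have "u1 \<noteq> 0"
    using indep q_gt_1 by auto
  define D where "D = u1 * Lq u2 - u2 * Lq u1"
  have "D \<noteq> 0"
    using indep by (simp add: D_def Lq_def algebra_simps)
  obtain \<mu> where w: "w1 = \<mu> * u1" "w2 = \<mu> * u2"
    using exists_proportionality_factor[OF coeffs(1)] \<open>u1 \<noteq> 0\<close> by blast
  have "Lq u1 \<noteq> 0 \<or> Lq u2 \<noteq> 0"
    using \<open>D \<noteq> 0\<close> by (auto simp: D_def)
  then obtain \<rho> where \<rho>: "Lq w1 = \<rho> * Lq u1" "Lq w2 = \<rho> * Lq u2"
    using exists_proportionality_factor[OF coeffs(2)] by blast
  have "(\<mu> * \<tau> - \<rho> * \<tau>') * D = 0" "(\<mu> * \<delta> - \<rho> * \<delta>') * D = 0"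
    using coeffs(3,4)[unfolded \<rho>, unfolded w] by (simp_all add: D_def algebra_simps)
  then have \<tau>: "\<mu> * \<tau> = \<rho> * \<tau>'" and \<delta>: "\<mu> * \<delta> = \<rho> * \<delta>'"
    using \<open>D \<noteq> 0\<close> by simp_all
  have "\<alpha> * U_vec \<tau> \<delta> u1 = w1 + Lq u1 * (\<rho> * \<tau>') * \<gamma> + Lq u1 * (\<rho> * \<delta>') * \<gamma>\<^sup>2"
    unfolding y1 by (simp add: U_vec_def \<rho>(1) algebra_simps)
  also have "\<dots> = \<mu> * U_vec \<tau> \<delta> u1"
    unfolding U_vec_def w(1) \<tau>[symmetric] \<delta>[symmetric] by (simp add: algebra_simps)
  finally have "\<alpha> * U_vec \<tau> \<delta> u1 = \<mu> * U_vec \<tau> \<delta> u1" .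
  moreover have "U_vec \<tau> \<delta> u1 \<noteq> 0"
    using U_vec_eq_0_iff K(1,5,6) \<open>u1 \<noteq> 0\<close> by simp
  ultimately have "\<alpha> = \<mu>"
    by simp
  moreover have "\<mu> ^ q = \<mu> \<and> \<rho> = \<mu>"
    using Lq_proportional_imp_Fq \<open>u1 \<noteq> 0\<close> indep \<rho> w by metis
  ultimately show ?thesis
    using \<tau> \<delta> \<open>\<alpha> \<noteq> 0\<close> by (simp add: subfield_of_order_def)
qed

lemma U_td_common_pair_rigid:
  assumes "\<tau> \<in> K" "\<delta> \<in> K - {0}" "\<tau>' \<in> K" "\<delta>' \<in> K - {0}" "\<alpha> \<noteq> 0" "\<beta> \<noteq> 0"
    and x1: "x1 \<in> (*) \<alpha> ` U_td q k \<gamma> \<tau> \<delta> \<inter> (*) \<beta> ` U_td q k \<gamma> \<tau>' \<delta>'"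
    and x2: "x2 \<in> (*) \<alpha> ` U_td q k \<gamma> \<tau> \<delta> \<inter> (*) \<beta> ` U_td q k \<gamma> \<tau>' \<delta>'"
    and "x1 \<noteq> 0" and "x2 \<notin> (\<lambda>c. c * x1) ` Fq"
  shows "\<alpha> / \<beta> \<in> Fq \<and> \<tau> = \<tau>' \<and> \<delta> = \<delta>'"
proof -
  have K: "\<tau> \<in> K" "\<delta> \<in> K" "\<tau>' \<in> K" "\<delta>' \<in> K" and "\<delta> \<noteq> 0" "\<delta>' \<noteq> 0" "\<alpha> / \<beta> \<noteq> 0"
    using assms(1-6) by simp_all
  obtain u1 w1 where u1: "u1 \<in> K" "w1 \<in> K" "x1 = \<alpha> * U_vec \<tau> \<delta> u1" "x1 = \<beta> * U_vec \<tau>' \<delta>' w1"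
    using x1 unfolding U_td_eq_image by blast
  obtain u2 w2 where u2: "u2 \<in> K" "w2 \<in> K" "x2 = \<alpha> * U_vec \<tau> \<delta> u2" "x2 = \<beta> * U_vec \<tau>' \<delta>' w2"
    using x2 unfolding U_td_eq_image by blast
  have "u1 \<noteq> 0"
    using u1(3) \<open>x1 \<noteq> 0\<close> U_vec_eq_0_iff[OF zero_mem_K K(1,2)] by auto
  have "u1 * u2 ^ q \<noteq> u2 * u1 ^ q"
  proof
    assume "u1 * u2 ^ q = u2 * u1 ^ q"
    then have "(u2 / u1) ^ q = u2 / u1"
      using \<open>u1 \<noteq> 0\<close> by (simp add: power_divide field_simps)
    then have c: "u2 / u1 \<in> Fq"
      by (simp add: subfield_of_order_def)
    have "x2 = \<alpha> * U_vec \<tau> \<delta> (u2 / u1 * u1)"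
      using u2(3) \<open>u1 \<noteq> 0\<close> by simp
    also have "\<dots> = u2 / u1 * x1"
      unfolding U_vec_Fq_mult[OF c] u1(3) by (simp add: algebra_simps)
    finally show False
      using \<open>x2 \<notin> (\<lambda>c. c * x1) ` Fq\<close> c by blast
  qed
  moreover have "\<alpha> / \<beta> * U_vec \<tau> \<delta> u1 = U_vec \<tau>' \<delta>' w1" "\<alpha> / \<beta> * U_vec \<tau> \<delta> u2 = U_vec \<tau>' \<delta>' w2"
    using u1(3,4) u2(3,4) \<open>\<beta> \<noteq> 0\<close> by (simp_all add: field_simps)
  ultimately show ?thesis
    using U_vec_scaled_pair_rigid[OF u1(1) u2(1) u1(2) u2(2) K \<open>\<delta> \<noteq> 0\<close> \<open>\<delta>' \<noteq> 0\<close> \<open>\<alpha> / \<beta> \<noteq> 0\<close>]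
    by blast
qed

lemma Fq_subspace_scaled_U_td:
  assumes "\<tau> \<in> K" "\<delta> \<in> K"
  shows "Fq_subspace q ((*) \<alpha> ` U_td q k \<gamma> \<tau> \<delta>)"
  by (rule Fq_subspace_scale[OF Fq_subspace_U_td[OF assms]])

lemma card_scaled_U_td:
  assumes "\<tau> \<in> K" "\<delta> \<in> K" "\<alpha> \<noteq> 0"
  shows "card ((*) \<alpha> ` U_td q k \<gamma> \<tau> \<delta>) = q ^ k"
  using card_U_td[OF assms(1,2)] \<open>\<alpha> \<noteq> 0\<close> by (simp add: card_image inj_on_def)

lemma scaled_U_td_eq_iff:
  assumes "\<tau> \<in> K" "\<delta> \<in> K - {0}" "\<tau>' \<in> K" "\<delta>' \<in> K - {0}" "\<alpha> \<noteq> 0" "\<beta> \<noteq> 0"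
  shows "(*) \<alpha> ` U_td q k \<gamma> \<tau> \<delta> = (*) \<beta> ` U_td q k \<gamma> \<tau>' \<delta>' \<longleftrightarrow> \<alpha> / \<beta> \<in> Fq \<and> \<tau> = \<tau>' \<and> \<delta> = \<delta>'"
proof
  assume eq: "(*) \<alpha> ` U_td q k \<gamma> \<tau> \<delta> = (*) \<beta> ` U_td q k \<gamma> \<tau>' \<delta>'"
  have "card Fq < card ((*) \<alpha> ` U_td q k \<gamma> \<tau> \<delta>)"
    using card_scaled_U_td assms(1,2,5) card_Fq q_less_power_k by simp
  moreover have "Fq_subspace q ((*) \<alpha> ` U_td q k \<gamma> \<tau> \<delta>)"
    using assms(1,2) by (simp add: Fq_subspace_scaled_U_td)
  ultimately obtain x1 x2 where x: "x1 \<in> (*) \<alpha> ` U_td q k \<gamma> \<tau> \<delta>" "x2 \<in> (*) \<alpha> ` U_td q k \<gamma> \<tau> \<delta>"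
    "x1 \<noteq> 0" "x2 \<notin> (\<lambda>c. c * x1) ` Fq"
    by (metis exists_Fq_independent_pair)
  then have "x1 \<in> (*) \<alpha> ` U_td q k \<gamma> \<tau> \<delta> \<inter> (*) \<beta> ` U_td q k \<gamma> \<tau>' \<delta>'"
    "x2 \<in> (*) \<alpha> ` U_td q k \<gamma> \<tau> \<delta> \<inter> (*) \<beta> ` U_td q k \<gamma> \<tau>' \<delta>'"
    using eq by simp_all
  then show "\<alpha> / \<beta> \<in> Fq \<and> \<tau> = \<tau>' \<and> \<delta> = \<delta>'"
    using U_td_common_pair_rigid[OF assms] x(3,4) by blast
next
  assume params: "\<alpha> / \<beta> \<in> Fq \<and> \<tau> = \<tau>' \<and> \<delta> = \<delta>'"
  have scale: "(*) (\<alpha> / \<beta>) ` U_td q k \<gamma> \<tau> \<delta> = U_td q k \<gamma> \<tau> \<delta>"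
    using params assms by (intro Fq_subspace_scale_eq[OF Fq_subspace_U_td]) simp_all
  have "(*) \<alpha> ` U_td q k \<gamma> \<tau> \<delta> = (*) \<beta> ` ((*) (\<alpha> / \<beta>) ` U_td q k \<gamma> \<tau> \<delta>)"
    using \<open>\<beta> \<noteq> 0\<close> by (simp add: image_image)
  also have "\<dots> = (*) \<beta> ` U_td q k \<gamma> \<tau> \<delta>"
    unfolding scale ..
  finally show "(*) \<alpha> ` U_td q k \<gamma> \<tau> \<delta> = (*) \<beta> ` U_td q k \<gamma> \<tau>' \<delta>'"
    using params by simp
qed

definition code :: "'a set set" where
  "code = (\<Union>(\<tau>, \<delta>)\<in>(K - {0}) \<times> (K - {0}). orbit (U_td q k \<gamma> \<tau> \<delta>))"

lemma mem_code_iff: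
  "A \<in> code \<longleftrightarrow> (\<exists>\<tau>\<in>K - {0}. \<exists>\<delta>\<in>K - {0}. \<exists>\<alpha>. \<alpha> \<noteq> 0 \<and> A = (*) \<alpha> ` U_td q k \<gamma> \<tau> \<delta>)"
  by (auto simp: code_def orbit_def)

lemma Fq_subspace_code: "A \<in> code \<Longrightarrow> Fq_subspace q A"
  by (auto simp: mem_code_iff Fq_subspace_scaled_U_td)

lemma card_mem_code: "A \<in> code \<Longrightarrow> card A = q ^ k"
  by (auto simp: mem_code_iff card_scaled_U_td)

lemma Fq_dim_code: "A \<in> code \<Longrightarrow> Fq_dim q A = k"
  by (rule Fq_dim_eq_if_card[OF q_power_CHAR Fq_subspace_code card_Fq card_mem_code])

lemma inter_code_eq_line:
  assumes "A \<in> code" "B \<in> code" "A \<noteq> B" "x1 \<in> A \<inter> B" "x1 \<noteq> 0"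
  shows "A \<inter> B = (\<lambda>c. c * x1) ` Fq"
proof
  obtain \<tau> \<delta> \<alpha> where A: "\<tau> \<in> K" "\<delta> \<in> K - {0}" "\<alpha> \<noteq> 0" "A = (*) \<alpha> ` U_td q k \<gamma> \<tau> \<delta>"
    using assms(1) unfolding mem_code_iff by blast
  obtain \<tau>' \<delta>' \<beta> where B: "\<tau>' \<in> K" "\<delta>' \<in> K - {0}" "\<beta> \<noteq> 0" "B = (*) \<beta> ` U_td q k \<gamma> \<tau>' \<delta>'"
    using assms(2) unfolding mem_code_iff by blast
  show "A \<inter> B \<subseteq> (\<lambda>c. c * x1) ` Fq"
  proof
    fix x2
    assume "x2 \<in> A \<inter> B"
    show "x2 \<in> (\<lambda>c. c * x1) ` Fq"
    proof (rule ccontr)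
      assume "x2 \<notin> (\<lambda>c. c * x1) ` Fq"
      then have "\<alpha> / \<beta> \<in> Fq \<and> \<tau> = \<tau>' \<and> \<delta> = \<delta>'"
        using U_td_common_pair_rigid[OF A(1,2) B(1,2) A(3) B(3)] assms(4,5) \<open>x2 \<in> A \<inter> B\<close>
        unfolding A(4) B(4) by blast
      then show False
        using assms(3) scaled_U_td_eq_iff[OF A(1,2) B(1,2) A(3) B(3)] unfolding A(4) B(4) by blast
    qed
  qed
  show "(\<lambda>c. c * x1) ` Fq \<subseteq> A \<inter> B"
    using assms(1,2,4) Fq_subspace_code Fq_subspace_Fq_mult by blast
qed

lemma Fq_dim_inter_code:
  assumes "A \<in> code" "B \<in> code" "A \<noteq> B"
  shows "Fq_dim q (A \<inter> B) = (if A \<inter> B = {0} then 0 else 1)"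
proof -
  have sub: "Fq_subspace q (A \<inter> B)"
    using assms(1,2) by (intro Fq_subspace_Int Fq_subspace_code)
  have "card (A \<inter> B) = q ^ (if A \<inter> B = {0} then 0 else 1)"
  proof (cases "A \<inter> B = {0}")
    case False
    moreover have "0 \<in> A \<inter> B"
      using sub unfolding Fq_subspace_def by blast
    ultimately obtain x where "x \<in> A \<inter> B" "x \<noteq> 0"
      by blast
    then have "card (A \<inter> B) = card ((\<lambda>c. c * x) ` Fq)"
      using inter_code_eq_line assms by simp
    also have "\<dots> = q"
      using \<open>x \<noteq> 0\<close> card_Fq by (simp add: card_image inj_on_def)
    finally show ?thesis
      using False by simp
  qed simp
  then show ?thesis
    using Fq_dim_eq_if_card[OF q_power_CHAR sub card_Fq] by blast
qed

lemma subspace_dist_code: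
  assumes "A \<in> code" "B \<in> code" "A \<noteq> B"
  shows "subspace_dist q A B = (if A \<inter> B = {0} then 2 * k else 2 * k - 2)"
  using Fq_dim_inter_code[OF assms] Fq_dim_code assms(1,2) by (auto simp: subspace_dist_def)

lemma card_Lq_roots_le: "card {y. Lq y = 0} \<le> q"
proof -
  let ?P = "monom (1::'a) q + monom 1 1"
  have "coeff ?P q = 1"
    using q_gt_1 by (simp add: coeff_monom)
  then have "?P \<noteq> 0"
    by (metis coeff_0 zero_neq_one)
  then have "card {y. poly ?P y = 0} \<le> degree ?P"
    by (rule card_poly_roots_bound)
  moreover have "degree ?P \<le> q"
    using q_gt_1 by (intro degree_add_le) (auto intro: order.trans[OF degree_monom_le])
  ultimately show ?thesis
    by (simp add: poly_monom Lq_def)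
qed

lemma exists_Lq_nonzero_pair: "\<exists>u\<in>K. \<exists>\<alpha>\<in>K - Fq. Lq u \<noteq> 0 \<and> Lq (\<alpha> * u) \<noteq> 0"
proof -
  have "card {y. Lq y = 0} < card K"
    using card_Lq_roots_le card_K q_less_power_k by simp
  then have "\<not> K \<subseteq> {y. Lq y = 0}"
    using card_mono[of "{y. Lq y = 0}" K] by auto
  then obtain u where u: "u \<in> K" "Lq u \<noteq> 0"
    by blast
  then have "u \<noteq> 0"
    using Lq_0 by auto
  define Z where "Z = {a. Lq (a * u) = 0}"
  have "Z \<subseteq> (\<lambda>y. y / u) ` {y. Lq y = 0}"
  proof
    fix a
    assume "a \<in> Z"
    then show "a \<in> (\<lambda>y. y / u) ` {y. Lq y = 0}"
      using \<open>u \<noteq> 0\<close> by (intro image_eqI[of _ _ "a * u"]) (simp_all add: Z_def)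
  qed
  then have "card Z \<le> card ((\<lambda>y. y / u) ` {y. Lq y = 0})"
    by (intro card_mono) simp_all
  also have "\<dots> \<le> q"
    using card_image_le[of "{y. Lq y = 0}" "\<lambda>y. y / u"] card_Lq_roots_le by simp
  finally have "card Z \<le> q" .
  have "0 \<in> Fq \<inter> Z"
    using zero_mem_Fq Lq_0 by (simp add: Z_def)
  then have "card (Fq \<inter> Z) \<ge> 1"
    by (metis One_nat_def Suc_leI card_gt_0_iff empty_iff finite)
  with \<open>card Z \<le> q\<close> have "card (Fq \<union> Z) < 2 * q"
    using card_Un_Int[of Fq Z] card_Fq by simp
  also have "2 * q \<le> q ^ 2"
    using q_gt_1 by (simp add: power2_eq_square)
  also have "\<dots> \<le> card K"
    using two_le_k q_gt_1 card_K by (simp add: power_increasing)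
  finally have "\<not> K \<subseteq> Fq \<union> Z"
    using card_mono[of "Fq \<union> Z" K] by auto
  then show ?thesis
    using u unfolding Z_def by blast
qed

(* theta is chosen so that U_vec theta theta (alpha u) = alpha U_vec 1 1 u; as alpha is not in
   F_q, the codewords alpha U_{1,1} and U_{theta,theta} differ. *)
lemma exists_code_pair_meeting: "\<exists>A\<in>code. \<exists>B\<in>code. A \<noteq> B \<and> A \<inter> B \<noteq> {0}"
proof -
  obtain u \<alpha> where u: "u \<in> K" "Lq u \<noteq> 0" and \<alpha>: "\<alpha> \<in> K" "\<alpha> \<notin> Fq" "Lq (\<alpha> * u) \<noteq> 0"
    using exists_Lq_nonzero_pair by blast
  have "u \<noteq> 0" "\<alpha> \<noteq> 0"
    using u(2) \<alpha>(2) Lq_0 zero_mem_Fq by auto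
  have "\<alpha> * u \<in> K"
    using \<alpha>(1) u(1) by (rule subfield_of_order_mult)
  define \<theta> where "\<theta> = \<alpha> * Lq u / Lq (\<alpha> * u)"
  have \<theta>: "\<theta> \<in> K - {0}"
    unfolding \<theta>_def using \<alpha> u \<open>\<alpha> \<noteq> 0\<close> \<open>\<alpha> * u \<in> K\<close>
    by (simp add: Lq_mem_K subfield_of_order_divide subfield_of_order_mult)
  have "Lq (\<alpha> * u) * \<theta> = \<alpha> * Lq u"
    using \<alpha>(3) by (simp add: \<theta>_def)
  then have "U_vec \<theta> \<theta> (\<alpha> * u) = \<alpha> * U_vec 1 1 u"
    unfolding U_vec_def by (simp add: algebra_simps)
  then have "\<alpha> * U_vec 1 1 u \<in> (*) 1 ` U_td q k \<gamma> \<theta> \<theta>"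
    unfolding U_td_eq_image using \<open>\<alpha> * u \<in> K\<close> by (simp add: image_iff) metis
  moreover have "\<alpha> * U_vec 1 1 u \<in> (*) \<alpha> ` U_td q k \<gamma> 1 1"
    unfolding U_td_eq_image using u(1) by (intro imageI)
  moreover have "\<alpha> * U_vec 1 1 u \<noteq> 0"
    using U_vec_eq_0_iff[OF u(1) one_mem_K one_mem_K] \<open>u \<noteq> 0\<close> \<open>\<alpha> \<noteq> 0\<close> by simp
  moreover have "(*) \<alpha> ` U_td q k \<gamma> 1 1 \<noteq> (*) 1 ` U_td q k \<gamma> \<theta> \<theta>"
    using scaled_U_td_eq_iff[of 1 1 \<theta> \<theta> \<alpha> 1] \<theta> \<alpha>(2) \<open>\<alpha> \<noteq> 0\<close> one_mem_K by simp
  moreover have "(*) \<alpha> ` U_td q k \<gamma> 1 1 \<in> code"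
    unfolding mem_code_iff using \<open>\<alpha> \<noteq> 0\<close> one_mem_K by (intro bexI[of _ 1] exI[of _ \<alpha>]) simp_all
  moreover have "(*) 1 ` U_td q k \<gamma> \<theta> \<theta> \<in> code"
    unfolding mem_code_iff using \<theta> by (intro bexI[of _ \<theta>] exI[of _ 1]) simp_all
  ultimately show ?thesis
    by blast
qed

lemma scalars_fixing_scaled_U_td:
  assumes "\<tau> \<in> K" "\<delta> \<in> K - {0}" "\<beta> \<noteq> 0"
  shows "{\<alpha>. \<alpha> \<noteq> 0 \<and> (*) \<alpha> ` U_td q k \<gamma> \<tau> \<delta> = (*) \<beta> ` U_td q k \<gamma> \<tau> \<delta>} = (\<lambda>c. c * \<beta>) ` (Fq - {0})"
proof (intro set_eqI iffI)
  fix \<alpha>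
  assume "\<alpha> \<in> {\<alpha>. \<alpha> \<noteq> 0 \<and> (*) \<alpha> ` U_td q k \<gamma> \<tau> \<delta> = (*) \<beta> ` U_td q k \<gamma> \<tau> \<delta>}"
  then have "\<alpha> \<noteq> 0" "\<alpha> / \<beta> \<in> Fq"
    using scaled_U_td_eq_iff[OF assms(1,2) assms(1,2) _ assms(3)] by auto
  then show "\<alpha> \<in> (\<lambda>c. c * \<beta>) ` (Fq - {0})"
    using \<open>\<beta> \<noteq> 0\<close> by (intro image_eqI[of _ _ "\<alpha> / \<beta>"]) simp_all
next
  fix \<alpha>
  assume "\<alpha> \<in> (\<lambda>c. c * \<beta>) ` (Fq - {0})"
  then have "\<alpha> \<noteq> 0" "\<alpha> / \<beta> \<in> Fq"
    using \<open>\<beta> \<noteq> 0\<close> by auto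
  then show "\<alpha> \<in> {\<alpha>. \<alpha> \<noteq> 0 \<and> (*) \<alpha> ` U_td q k \<gamma> \<tau> \<delta> = (*) \<beta> ` U_td q k \<gamma> \<tau> \<delta>}"
    using scaled_U_td_eq_iff[OF assms(1,2) assms(1,2) _ assms(3)] by simp
qed

(* The nonzero scalars are partitioned into the fibres of alpha |-> alpha U_{tau,delta}, each
   a coset of F_q^*. *)
lemma card_orbit_U_td:
  assumes "\<tau> \<in> K" "\<delta> \<in> K - {0}"
  shows "card (orbit (U_td q k \<gamma> \<tau> \<delta>)) = (card (UNIV :: 'a set) - 1) div (q - 1)"
proof -
  let ?U = "U_td q k \<gamma> \<tau> \<delta>"
  define fibre where "fibre V = {\<alpha>. \<alpha> \<noteq> 0 \<and> (*) \<alpha> ` ?U = V}" for V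
  have card_fibre: "card (fibre V) = q - 1" if V_orbit: "V \<in> orbit ?U" for V
  proof -
    obtain \<beta> where "\<beta> \<noteq> 0" and V: "V = (*) \<beta> ` ?U"
      using V_orbit unfolding mem_orbit_iff by blast
    have "inj_on (\<lambda>c. c * \<beta>) (Fq - {0})"
      using \<open>\<beta> \<noteq> 0\<close> by (simp add: inj_on_def)
    then show ?thesis
      using scalars_fixing_scaled_U_td[OF assms \<open>\<beta> \<noteq> 0\<close>] card_Fq zero_mem_Fq
      by (simp add: fibre_def V card_image card_Diff_singleton)
  qed
  have "UNIV - {0} = (\<Union>V\<in>orbit ?U. fibre V)"
  proof (intro set_eqI iffI)
    fix \<alpha> :: 'a
    assume "\<alpha> \<in> UNIV - {0}"
    then have "\<alpha> \<in> fibre ((*) \<alpha> ` ?U)" "(*) \<alpha> ` ?U \<in> orbit ?U"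
      by (auto simp: fibre_def mem_orbit_iff)
    then show "\<alpha> \<in> (\<Union>V\<in>orbit ?U. fibre V)"
      by blast
  qed (auto simp: fibre_def)
  then have "card (UNIV :: 'a set) - 1 = card (\<Union>V\<in>orbit ?U. fibre V)"
    by (simp add: card_Diff_singleton flip: \<open>UNIV - {0} = (\<Union>V\<in>orbit ?U. fibre V)\<close>)
  also have "\<dots> = (\<Sum>V\<in>orbit ?U. card (fibre V))"
    by (rule card_UN_disjoint) (auto simp: fibre_def)
  also have "\<dots> = card (orbit ?U) * (q - 1)"
    by (simp add: card_fibre)
  finally show ?thesis
    using q_gt_1 by simp
qed

lemma orbit_U_td_disjoint:
  assumes "\<tau> \<in> K" "\<delta> \<in> K - {0}" "\<tau>' \<in> K" "\<delta>' \<in> K - {0}" and "(\<tau>, \<delta>) \<noteq> (\<tau>', \<delta>')"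
  shows "orbit (U_td q k \<gamma> \<tau> \<delta>) \<inter> orbit (U_td q k \<gamma> \<tau>' \<delta>') = {}"
proof -
  have False if V: "V \<in> orbit (U_td q k \<gamma> \<tau> \<delta>)" "V \<in> orbit (U_td q k \<gamma> \<tau>' \<delta>')" for V
  proof -
    obtain \<alpha> \<beta> where "\<alpha> \<noteq> 0" "\<beta> \<noteq> 0" "V = (*) \<alpha> ` U_td q k \<gamma> \<tau> \<delta>" "V = (*) \<beta> ` U_td q k \<gamma> \<tau>' \<delta>'"
      using V unfolding mem_orbit_iff by blast
    then have "\<tau> = \<tau>' \<and> \<delta> = \<delta>'"
      using scaled_U_td_eq_iff[OF assms(1-4)] by blast
    then show False
      using assms(5) by simp
  qed
  then show ?thesis
    by blast
qed

lemma card_code: "card code = (q ^ k - 1)\<^sup>2 * ((card (UNIV :: 'a set) - 1) div (q - 1))"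
proof -
  let ?P = "(K - {0}) \<times> (K - {0})" and ?orbit = "\<lambda>(\<tau>, \<delta>). orbit (U_td q k \<gamma> \<tau> \<delta>)"
  have disjoint: "\<forall>i\<in>?P. \<forall>j\<in>?P. i \<noteq> j \<longrightarrow> ?orbit i \<inter> ?orbit j = {}"
  proof (intro ballI impI)
    fix i j
    assume "i \<in> ?P" "j \<in> ?P" "i \<noteq> j"
    moreover obtain \<tau> \<delta> \<tau>' \<delta>' where "i = (\<tau>, \<delta>)" "j = (\<tau>', \<delta>')"
      by fastforce
    ultimately show "?orbit i \<inter> ?orbit j = {}"
      using orbit_U_td_disjoint[of \<tau> \<delta> \<tau>' \<delta>'] by simp
  qed
  have "card code = (\<Sum>i\<in>?P. card (?orbit i))"
    unfolding code_def by (rule card_UN_disjoint[OF _ _ disjoint]) simp_all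
  also have "\<dots> = (\<Sum>i\<in>?P. (card (UNIV :: 'a set) - 1) div (q - 1))"
  proof (rule sum.cong[OF refl])
    fix i
    assume "i \<in> ?P"
    then obtain \<tau> \<delta> where "i = (\<tau>, \<delta>)" "\<tau> \<in> K" "\<delta> \<in> K - {0}"
      by blast
    then show "card (?orbit i) = (card (UNIV :: 'a set) - 1) div (q - 1)"
      by (simp add: card_orbit_U_td)
  qed
  also have "\<dots> = (q ^ k - 1)\<^sup>2 * ((card (UNIV :: 'a set) - 1) div (q - 1))"
    using card_K zero_mem_K by (simp add: card_cartesian_product card_Diff_singleton power2_eq_square)
  finally show ?thesis .
qed

lemma cyclic_code_code: "cyclic_code code"
  unfolding cyclic_code_def code_def
  by (intro exI[of _ "(\<lambda>(\<tau>, \<delta>). U_td q k \<gamma> \<tau> \<delta>) ` ((K - {0}) \<times> (K - {0}))"]) (simp add: image_image case_prod_unfold)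

lemma min_distance_code: "min_distance q code = 2 * k - 2"
  unfolding min_distance_def
proof (rule Min_eqI)
  have "finite {subspace_dist q U V | U V. U \<in> code \<and> V \<in> code}"
    by (rule finite_image_set2) simp_all
  then show "finite {subspace_dist q U V | U V. U \<in> code \<and> V \<in> code \<and> U \<noteq> V}"
    by (rule finite_subset[rotated]) blast
  show "2 * k - 2 \<le> d" if d: "d \<in> {subspace_dist q U V | U V. U \<in> code \<and> V \<in> code \<and> U \<noteq> V}" for d
  proof -
    obtain U V where "U \<in> code" "V \<in> code" "U \<noteq> V" "d = subspace_dist q U V"
      using d by blast
    then show ?thesis
      using subspace_dist_code by simp
  qed
  obtain A B where "A \<in> code" "B \<in> code" "A \<noteq> B" "A \<inter> B \<noteq> {0}"
    using exists_code_pair_meeting by blast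
  then have "2 * k - 2 = subspace_dist q A B \<and> A \<in> code \<and> B \<in> code \<and> A \<noteq> B"
    using subspace_dist_code by simp
  then show "2 * k - 2 \<in> {subspace_dist q U V | U V. U \<in> code \<and> V \<in> code \<and> U \<noteq> V}"
    by blast
qed

end

lemma U_td_code_if_root_of_irreducible:
  fixes \<gamma> :: "'a::{field,finite}" and p :: "'a poly"
  assumes "prime P" and q: "q = P ^ m" and "2 \<le> k" and "4 < degree p"
    and card_UNIV: "card (UNIV :: 'a set) = q ^ (degree p * k)"
    and irr: "irreducible_over (subfield_of_order (q ^ k)) p" and "poly p \<gamma> = 0"
  shows "U_td_code q m k \<gamma>"
proof
  have "CHAR('a) = P"
    using card_UNIV \<open>prime P\<close> q
    by (intro CHAR_eq_if_card_UNIV_eq_prime_power[of P "m * (degree p * k)"]) (simp_all add: power_mult)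
  then show q_power_CHAR: "q = CHAR('a) ^ m"
    using q by simp
  show "card (subfield_of_order q :: 'a set) = q"
    using card_UNIV by (rule card_subfield_of_order)
  have "card (UNIV :: 'a set) = (q ^ k) ^ degree p"
    using card_UNIV by (simp add: power_mult mult.commute)
  then show "card (subfield_of_order (q ^ k) :: 'a set) = q ^ k"
    by (rule card_subfield_of_order)
  show "\<forall>i<5. c i = 0" if "\<forall>i<5. c i \<in> subfield_of_order (q ^ k)" "(\<Sum>i<5. c i * \<gamma> ^ i) = 0" for c
    using irreducible_over_root_powers_independent[of "q ^ k" "m * k" p \<gamma> 5 c] that irr
      \<open>4 < degree p\<close> \<open>poly p \<gamma> = 0\<close> q_power_CHAR by (simp add: power_mult)
qed fact

theorem lemma3p6:
  fixes q k r n :: nat and \<gamma> :: "'a::{field,finite}" and p :: "'a poly"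
  assumes "prime_power q" and "k \<ge> 2" and "r > 4" and "n = r * k"
    and "card (UNIV :: 'a set) = q ^ n"
    and "irreducible_over (subfield_of_order (q ^ k)) p" and "degree p = r"
    and "poly p \<gamma> = 0"
  defines "C \<equiv> (\<Union>(\<tau>, \<delta>) \<in> (subfield_of_order (q ^ k) - {0}) \<times> (subfield_of_order (q ^ k) - {0}).
                  orbit (U_td q k \<gamma> \<tau> \<delta>))"
  shows "subspace_code q C \<and> cyclic_code C \<and> constant_dimension q C
    \<and> card C = (q ^ k - 1)\<^sup>2 * ((q ^ n - 1) div (q - 1))
    \<and> min_distance q C = 2 * k - 2"
proof -
  obtain P m where "prime P" and "q = P ^ m"
    using assms(1) unfolding prime_power_def by blast
  interpret U_td_code q m k \<gamma>
    by (rule U_td_code_if_root_of_irreducible[OF \<open>prime P\<close> \<open>q = P ^ m\<close> assms(2)])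
      (use assms(3-8) in simp_all)
  have "C = code"
    unfolding C_def code_def ..
  then show ?thesis
    using exists_code_pair_meeting Fq_subspace_code Fq_dim_code cyclic_code_code min_distance_code
      card_code assms(5) by (auto simp: subspace_code_def constant_dimension_def)
qed

end
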